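(* Let $\mu\in(0,1)$. Then no Gamma density $q(x)=\frac{1}{\beta^a\Gamma(a)}x^{a-1}e^{-x/\beta}$ on $(0,\infty)$ (with $a>0$, $\beta>0$) satisfies $T_M[q]=q$; that is, the equilibrium distribution of the mixed model is not a Gamma distribution.
   Context: For a probability density $p$ on $[0,\infty)$ define $S[p](x)=\int_x^\infty \frac{p(u)}{u}\,du$, $T[p](x)=\int_0^x S[p](x-v)\,S[p](v)\,dv$, and $$T_D[p](x)=\frac12\int_0^x p(x-u)\int_u^\infty \frac{p(v)}{v}\,dv\,du+\frac12\int_x^\infty \frac{p(u)}{u}\,du,$$ for $x\ge0$. For a parameter $\mu\in[0,1]$, the mixed model operator is $T_M[p]=\mu\,T_D[p]+(1-\mu)\,T[p]$, and an equilibrium distribution of the mixed model is a probability density $p$ on $[0,\infty)$ with $T_M[p]=p$. *)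

theory Defs
  imports "HOL-Analysis.Analysis"
begin

definition S_op :: "(real \<Rightarrow> real) \<Rightarrow> real \<Rightarrow> real" where
  "S_op p x = (LINT u:{x..}|lborel. p u / u)"

definition T_op :: "(real \<Rightarrow> real) \<Rightarrow> real \<Rightarrow> real" where
  "T_op p x = (LINT v:{0..x}|lborel. S_op p (x - v) * S_op p v)"

definition TD_op :: "(real \<Rightarrow> real) \<Rightarrow> real \<Rightarrow> real" where
  "TD_op p x = 1/2 * (LINT u:{0..x}|lborel. p (x - u) * (LINT v:{u..}|lborel. p v / v))
              + 1/2 * (LINT u:{x..}|lborel. p u / u)"

definition TM_op :: "real \<Rightarrow> (real \<Rightarrow> real) \<Rightarrow> real \<Rightarrow> real" where
  "TM_op \<mu> p x = \<mu> * TD_op p x + (1 - \<mu>) * T_op p x"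

definition gamma_density :: "real \<Rightarrow> real \<Rightarrow> real \<Rightarrow> real" where
  "gamma_density a \<beta> x =
     (if x > 0 then x powr (a - 1) * exp (- x / \<beta>) / (\<beta> powr a * Gamma a) else 0)"

end

theory Submission
  imports Defs
begin

text \<open>Near 0 the mixed operator is governed by its term \<mu>/2 \<cdot> S[q]: both convolution terms
are O(x^(2a-1)), while q(x) \<le> x^(a-1)/C with C = \<beta>^a \<Gamma>(a).
If a \<ge> 1, then S[q](x) \<ge> c x^(a-1) ln(1/x), so T_M[q] > q near 0.
If a < 1, then S[q](x) = x^(a-1)/((1-a)C) + O(1), so \<mu>/2 \<cdot> S[q] is asymptotic to r q with
r = \<mu>/(2(1-a)); for r > 1 again T_M[q] > q near 0. For r \<le> 1 the sharper bound
S[q](x) \<le> (x^(a-1) - \<beta>^(a-1))/((1-a)C) + \<beta>^(a-1)/C yields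
C (T_M[q] - q)(x) \<le> M x^(2a-1) + (r-1) x^(a-1) - D + x^a/\<beta> with D > 0, and the right-hand
side is negative near 0 (for r = 1 because then 2a - 1 = 1 - \<mu> > 0).\<close>

lemma set_integrable_if_nonneg_integrable_on:
  fixes f :: "real \<Rightarrow> real"
  assumes "f integrable_on A" and "\<And>x. x \<in> A \<Longrightarrow> 0 \<le> f x"
    and "(\<lambda>x. indicator A x * f x) \<in> borel_measurable borel"
  shows "set_integrable lborel A f"
proof -
  have "set_integrable lebesgue A f"
    by (rule nonnegative_absolutely_integrable_1) (use assms in auto)
  then show ?thesis
    unfolding set_integrable_def
    using integrable_completion[of "\<lambda>x. indicator A x *\<^sub>R f x" lborel] assms(3) by simp
qed

lemma set_integral_nonneg_real:
  fixes f :: "real \<Rightarrow> real"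
  assumes "\<And>x. x \<in> A \<Longrightarrow> 0 \<le> f x"
  shows "0 \<le> (LINT x:A|lborel. f x)"
  unfolding set_lebesgue_integral_def
  using assms by (intro integral_nonneg_AE) (auto simp: indicator_def)

text \<open>No integrability of \<open>f\<close> is needed: a non-integrable function has integral 0.\<close>

lemma set_integral_le_if_nonneg:
  fixes f g :: "real \<Rightarrow> real"
  assumes "set_integrable lborel A g" and "\<And>x. x \<in> A \<Longrightarrow> 0 \<le> f x"
    and "AE x in lborel. x \<in> A \<longrightarrow> f x \<le> g x"
  shows "(LINT x:A|lborel. f x) \<le> (LINT x:A|lborel. g x)"
proof (cases "set_integrable lborel A f")
  case True
  then show ?thesis using assms by (intro set_integral_mono_AE) auto
next
  case False
  then have "(LINT x:A|lborel. f x) = 0"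
    unfolding set_integrable_def set_lebesgue_integral_def by (simp add: not_integrable_integral_eq)
  moreover have "AE x in lborel. 0 \<le> indicator A x * g x"
    using assms(3) by eventually_elim (use assms(2) in \<open>force simp: indicator_def\<close>)
  then have "0 \<le> (LINT x:A|lborel. g x)"
    by (simp add: set_lebesgue_integral_def integral_nonneg_AE)
  ultimately show ?thesis by simp
qed

lemma has_integral_powr_minus_2_interval:
  fixes x y a :: real
  assumes "0 < x" "x \<le> y" "a \<noteq> 1"
  shows "((\<lambda>u. u powr (a - 2)) has_integral (x powr (a - 1) - y powr (a - 1)) / (1 - a)) {x..y}"
proof -
  have "((\<lambda>u. u powr (a - 2)) has_integral (y powr (a - 1) / (a - 1) - x powr (a - 1) / (a - 1))) {x..y}"
  proof (rule fundamental_theorem_of_calculus_interior_strong[where S = "{}"])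
    show "continuous_on {x..y} (\<lambda>u. u powr (a - 1) / (a - 1))"
      using assms by (intro continuous_intros) auto
    fix u assume "u \<in> {x<..<y} - {}"
    then have "((\<lambda>u. u powr (a - 1) / (a - 1)) has_real_derivative ((a - 1) * u powr (a - 1 - 1)) / (a - 1)) (at u)"
      using assms by (intro DERIV_cdivide has_real_derivative_powr) auto
    then show "((\<lambda>u. u powr (a - 1) / (a - 1)) has_vector_derivative u powr (a - 2)) (at u)"
      using assms by (simp add: has_real_derivative_iff_has_vector_derivative[symmetric])
  qed (use assms in auto)
  then show ?thesis
    using minus_divide_divide[of "y powr (a - 1) - x powr (a - 1)" "a - 1"] by (simp add: diff_divide_distrib)
qed

lemma has_integral_inverse_interval:
  fixes x y :: real
  assumes "0 < x" "x \<le> y"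
  shows "(inverse has_integral ln y - ln x) {x..y}"
proof (rule fundamental_theorem_of_calculus_interior_strong[where S = "{}"])
  show "continuous_on {x..y} ln"
    using assms by (intro continuous_intros) auto
  fix u assume "u \<in> {x<..<y} - {}"
  then have "(ln has_real_derivative inverse u) (at u)"
    using assms by (intro DERIV_ln) auto
  then show "(ln has_vector_derivative inverse u) (at u)"
    by (simp add: has_real_derivative_iff_has_vector_derivative[symmetric])
qed (use assms in auto)

lemma has_integral_reflected_powr:
  fixes x a :: real
  assumes "0 < x" "0 < a"
  shows "((\<lambda>u. (x - u) powr (a - 1)) has_integral x powr a / a) {0..x}"
proof -
  have "((\<lambda>u. (x - u) powr (a - 1)) has_integral
          ((\<lambda>u. 0 - (x - u) powr a / a) x - (\<lambda>u. 0 - (x - u) powr a / a) 0)) {0..x}"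
  proof (rule fundamental_theorem_of_calculus_interior_strong[where S = "{}"])
    show "continuous_on {0..x} (\<lambda>u. 0 - (x - u) powr a / a)"
      using assms by (intro continuous_intros continuous_on_powr') auto
    fix u assume "u \<in> {0<..<x} - {}"
    then have "((\<lambda>u. 0 - (x - u) powr a / a) has_real_derivative
                 0 - ((a * (x - u) powr (a - 1)) * (0 - 1)) / a) (at u)"
      by (intro DERIV_diff DERIV_const DERIV_cdivide DERIV_chain2[OF has_real_derivative_powr]
          derivative_intros) auto
    then show "((\<lambda>u. 0 - (x - u) powr a / a) has_vector_derivative (x - u) powr (a - 1)) (at u)"
      using assms by (simp add: has_real_derivative_iff_has_vector_derivative[symmetric])
  qed (use assms in auto)
  then show ?thesis by simp
qed

lemma eventually_powr_less_at_right_0: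
  fixes e c :: real
  assumes "0 < e" "0 < c"
  shows "eventually (\<lambda>x. x powr e < c) (at_right 0)"
proof -
  have "((\<lambda>x. x powr e) \<longlongrightarrow> 0) (at_right 0)"
    by (rule tendsto_zero_powrI[OF tendsto_ident_at tendsto_const _ assms(1)])
       (auto simp: eventually_at_filter)
  then show ?thesis using assms(2) by (rule order_tendstoD(2))
qed

lemma eventually_less_at_right_0:
  fixes c :: real
  assumes "0 < c"
  shows "eventually (\<lambda>x. x < c) (at_right 0)"
  using assms by (auto simp: eventually_at_right_field)

lemma eventually_powr_greater_at_right_0:
  fixes e c :: real
  assumes "e < 0"
  shows "eventually (\<lambda>x. c < x powr e) (at_right 0)"
proof -
  have "eventually (\<lambda>x. x powr (- e) < 1 / max c 1) (at_right 0)"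
    using assms by (intro eventually_powr_less_at_right_0) auto
  moreover have "eventually (\<lambda>x::real. 0 < x) (at_right 0)"
    by (rule eventually_at_right_less)
  ultimately show ?thesis
  proof eventually_elim
    case (elim x)
    have "0 < max c 1"
      by simp
    then have "max c 1 < 1 / x powr (- e)"
      using elim by (simp add: less_divide_eq mult.commute)
    then show ?case
      using elim by (simp add: powr_minus divide_inverse)
  qed
qed

lemma eventually_powr_combination_less:
  fixes M r d a :: real
  assumes "0 \<le> M" "r \<le> 1" "0 < a" "0 < d" and "r = 1 \<Longrightarrow> 0 < 2 * a - 1"
  shows "eventually (\<lambda>x. M * x powr (2 * a - 1) + (r - 1) * x powr (a - 1) < d) (at_right 0)"
proof (cases "r = 1")
  case True
  have "eventually (\<lambda>x. x powr (2 * a - 1) < d / (M + 1)) (at_right 0)"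
    using assms True by (intro eventually_powr_less_at_right_0) auto
  then show ?thesis
  proof eventually_elim
    case (elim x)
    have "M * x powr (2 * a - 1) \<le> (M + 1) * x powr (2 * a - 1)"
      by (simp add: algebra_simps)
    also have "\<dots> < d"
      using elim assms by (simp add: less_divide_eq algebra_simps)
    finally show ?case
      using True by simp
  qed
next
  case False
  have "eventually (\<lambda>x. x powr a < (1 - r) / (M + 1)) (at_right 0)"
    using assms False by (intro eventually_powr_less_at_right_0) auto
  then show ?thesis
  proof eventually_elim
    case (elim x)
    have "M * x powr a \<le> (M + 1) * x powr a"
      by (simp add: algebra_simps)
    also have "\<dots> < 1 - r"
      using elim assms by (simp add: less_divide_eq mult.commute)
    finally have "x powr (a - 1) * (M * x powr a + (r - 1)) \<le> 0"
      by (intro mult_nonneg_nonpos) auto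
    moreover have "x powr (2 * a - 1) = x powr (a - 1) * x powr a"
      by (simp add: powr_add[symmetric])
    ultimately show ?case
      using assms by (simp add: algebra_simps)
  qed
qed

lemma exists_mult_exp_gt_1:
  fixes r b :: real
  assumes "1 < r" "0 < b"
  obtains y where "0 < y" "1 < r * exp (- y / b)"
proof
  show "0 < b * ln r / 2"
    using assms by simp
  have "r * exp (- (b * ln r / 2) / b) = exp (ln r) * exp (- (ln r / 2))"
    using assms by simp
  also have "\<dots> = exp (ln r / 2)"
    by (simp add: exp_add[symmetric])
  finally show "1 < r * exp (- (b * ln r / 2) / b)"
    using assms by simp
qed

subsection \<open>Convolution on the half-line and the mixed operator\<close>

definition conv0 :: "(real \<Rightarrow> real) \<Rightarrow> (real \<Rightarrow> real) \<Rightarrow> real \<Rightarrow> real" where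
  "conv0 f g x = (LINT u:{0..x}|lborel. f (x - u) * g u)"

lemma conv0_nonneg:
  assumes "\<And>u. 0 \<le> u \<Longrightarrow> 0 \<le> f u" and "\<And>u. 0 \<le> u \<Longrightarrow> 0 \<le> g u"
  shows "0 \<le> conv0 f g x"
  unfolding conv0_def using assms by (intro set_integral_nonneg_real) auto

lemma powr_mult_powr_le_midpoint:
  fixes x u a :: real
  assumes "0 < u" "u < x" "a < 1"
  shows "(x - u) powr (a - 1) * u powr (a - 1)
           \<le> (x / 2) powr (a - 1) * (u powr (a - 1) + (x - u) powr (a - 1))"
proof (cases "u \<le> x / 2")
  case True
  then have "(x - u) powr (a - 1) \<le> (x / 2) powr (a - 1)"
    using assms by (intro powr_mono2') auto
  then have "(x - u) powr (a - 1) * u powr (a - 1) \<le> (x / 2) powr (a - 1) * u powr (a - 1)"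
    by (rule mult_right_mono) simp
  then show ?thesis by (simp add: distrib_left add_increasing2)
next
  case False
  then have "u powr (a - 1) \<le> (x / 2) powr (a - 1)"
    using assms by (intro powr_mono2') auto
  then have "(x - u) powr (a - 1) * u powr (a - 1) \<le> (x / 2) powr (a - 1) * (x - u) powr (a - 1)"
    by (subst mult.commute, rule mult_right_mono) simp
  then show ?thesis by (simp add: distrib_left add_increasing)
qed

lemma conv0_le_set_integral:
  assumes h: "set_integrable lborel {0..x} h"
    and f_nonneg: "\<And>u. 0 \<le> u \<Longrightarrow> 0 \<le> f u" and g_nonneg: "\<And>u. 0 \<le> u \<Longrightarrow> 0 \<le> g u"
    and le_h: "\<And>u. 0 < u \<Longrightarrow> u < x \<Longrightarrow> f (x - u) * g u \<le> h u"
  shows "conv0 f g x \<le> (LINT u:{0..x}|lborel. h u)"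
  unfolding conv0_def
proof (rule set_integral_le_if_nonneg[OF h])
  show "\<And>u. u \<in> {0..x} \<Longrightarrow> 0 \<le> f (x - u) * g u"
    using f_nonneg g_nonneg by simp
  show "AE u in lborel. u \<in> {0..x} \<longrightarrow> f (x - u) * g u \<le> h u"
    using AE_lborel_singleton[of 0] AE_lborel_singleton[of x]
    by eventually_elim (use le_h in auto)
qed

lemma conv0_powr_bound:
  fixes f g :: "real \<Rightarrow> real" and x a c1 c2 :: real
  assumes x: "0 < x" and a: "0 < a" "a < 1" and c: "0 \<le> c1" "0 \<le> c2"
    and f_nonneg: "\<And>u. 0 \<le> u \<Longrightarrow> 0 \<le> f u" and g_nonneg: "\<And>u. 0 \<le> u \<Longrightarrow> 0 \<le> g u"
    and f_le: "\<And>u. 0 < u \<Longrightarrow> u < x \<Longrightarrow> f u \<le> c1 * u powr (a - 1)"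
    and g_le: "\<And>u. 0 < u \<Longrightarrow> u < x \<Longrightarrow> g u \<le> c2 * u powr (a - 1)"
  shows "conv0 f g x \<le> c1 * c2 * (2 powr (2 - a) / a) * x powr (2 * a - 1)"
proof -
  define h where "h u = c1 * c2 * ((x / 2) powr (a - 1) * (u powr (a - 1) + (x - u) powr (a - 1)))"
    for u
  define I where "I = c1 * c2 * ((x / 2) powr (a - 1) * (x powr a / a + x powr a / a))"
  have h_int: "(h has_integral I) {0..x}"
    unfolding h_def I_def
    using has_integral_add[OF has_integral_powr_from_0[of "a - 1" x] has_integral_reflected_powr[OF x a(1)]]
      x a by (intro has_integral_mult_right) simp
  have "(\<lambda>u. indicator {0..x} u * h u) \<in> borel_measurable borel"
    unfolding h_def by measurable
  then have h_set_int: "set_integrable lborel {0..x} h"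
    using h_int c by (intro set_integrable_if_nonneg_integrable_on) (auto simp: has_integral_integrable h_def)
  have "conv0 f g x \<le> (LINT u:{0..x}|lborel. h u)"
  proof (rule conv0_le_set_integral[OF h_set_int f_nonneg g_nonneg])
    fix u assume u: "0 < u" "u < x"
    have "f (x - u) * g u \<le> (c1 * (x - u) powr (a - 1)) * (c2 * u powr (a - 1))"
      using u c by (intro mult_mono f_le g_le f_nonneg g_nonneg) auto
    also have "\<dots> \<le> h u"
      unfolding h_def using c powr_mult_powr_le_midpoint[OF u a(2)]
      by (simp add: mult_left_mono mult.assoc mult.left_commute)
    finally show "f (x - u) * g u \<le> h u" .
  qed
  also have "\<dots> = I"
    using set_borel_integral_eq_integral(2)[OF h_set_int] h_int by (simp add: integral_unique)
  also have "I = c1 * c2 * (2 powr (2 - a) / a) * x powr (2 * a - 1)"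
  proof -
    have "x powr (2 * a - 1) = x powr (a - 1) * x powr a"
      by (simp add: powr_add[symmetric])
    moreover have "(x / 2) powr (a - 1) * 2 = 2 powr (2 - a) * x powr (a - 1)"
      using x by (simp add: powr_divide powr_diff field_simps)
    ultimately show ?thesis
      unfolding I_def by (simp add: field_simps)
  qed
  finally show ?thesis .
qed

lemma S_op_nonneg:
  assumes "0 \<le> x" and "\<And>u. x \<le> u \<Longrightarrow> 0 \<le> p u"
  shows "0 \<le> S_op p x"
  unfolding S_op_def using assms by (intro set_integral_nonneg_real) auto

lemma TM_op_eq_conv0:
  "TM_op \<mu> p x = \<mu> / 2 * conv0 p (S_op p) x + \<mu> / 2 * S_op p x + (1 - \<mu>) * conv0 (S_op p) (S_op p) x"
  unfolding TM_op_def TD_op_def T_op_def conv0_def S_op_def[symmetric] by (simp add: algebra_simps)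

lemma TM_op_ge_S_op:
  assumes "0 \<le> \<mu>" "\<mu> \<le> 1" "0 \<le> x" and p_nonneg: "\<And>u. 0 \<le> u \<Longrightarrow> 0 \<le> p u"
  shows "\<mu> / 2 * S_op p x \<le> TM_op \<mu> p x"
proof -
  have S_nonneg: "0 \<le> S_op p u" if "0 \<le> u" for u
    using that p_nonneg by (intro S_op_nonneg) auto
  show ?thesis
    unfolding TM_op_eq_conv0
    using assms conv0_nonneg[of p "S_op p" x] conv0_nonneg[of "S_op p" "S_op p" x] S_nonneg
    by (simp add: add_increasing add_increasing2)
qed

lemma set_integrable_S_integrand:
  fixes p :: "real \<Rightarrow> real"
  assumes "integrable lborel p" "0 < x"
  shows "set_integrable lborel {x..} (\<lambda>u. p u / u)"
proof (rule set_integrable_bound)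
  show "set_integrable lborel {x..} (\<lambda>u. p u / x)"
    unfolding set_integrable_def using assms(1) by (intro integrable_mult_indicator) auto
  show "set_borel_measurable lborel {x..} (\<lambda>u. p u / u)"
    unfolding set_borel_measurable_def using borel_measurable_integrable[OF assms(1)] by measurable
  show "AE u in lborel. u \<in> {x..} \<longrightarrow> norm (p u / u) \<le> norm (p u / x)"
    using assms(2) by (auto simp: abs_divide intro!: divide_left_mono)
qed

lemma S_op_eq_integral:
  assumes "integrable lborel p" "0 < x"
  shows "(\<lambda>u. p u / u) integrable_on {x..}" "S_op p x = integral {x..} (\<lambda>u. p u / u)"
  using set_borel_integral_eq_integral[OF set_integrable_S_integrand[OF assms]]
  unfolding S_op_def by auto

lemma S_op_ge_has_integral:
  assumes "integrable lborel p" "0 < x" "x \<le> y" and p_nonneg: "\<And>u. x \<le> u \<Longrightarrow> 0 \<le> p u"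
    and g: "(g has_integral I) {x..y}" and g_le: "\<And>u. x \<le> u \<Longrightarrow> u \<le> y \<Longrightarrow> g u \<le> p u / u"
  shows "I \<le> S_op p x"
proof -
  note int = S_op_eq_integral[OF assms(1,2)]
  have int_xy: "(\<lambda>u. p u / u) integrable_on {x..y}"
    using int(1) by (rule integrable_on_subinterval) auto
  have "I \<le> integral {x..y} (\<lambda>u. p u / u)"
    by (rule has_integral_le[OF g integrable_integral[OF int_xy]]) (use g_le in auto)
  also have "\<dots> \<le> integral {x..} (\<lambda>u. p u / u)"
    using p_nonneg assms(2) by (intro integral_subset_le[OF _ int_xy int(1)]) auto
  finally show ?thesis using int(2) by simp
qed

lemma S_op_le_has_integral:
  assumes "integrable lborel p" "0 < x"
    and h: "(h has_integral I) {x..}" and le_h: "\<And>u. x \<le> u \<Longrightarrow> p u / u \<le> h u"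
  shows "S_op p x \<le> I"
proof -
  note int = S_op_eq_integral[OF assms(1,2)]
  have "integral {x..} (\<lambda>u. p u / u) \<le> I"
    by (rule has_integral_le[OF integrable_integral[OF int(1)] h]) (use le_h in auto)
  then show ?thesis using int(2) by simp
qed

subsection \<open>Gamma densities\<close>

context
  fixes a \<beta> :: real
  assumes shape_pos: "0 < a" and scale_pos: "0 < \<beta>"
begin

definition gamma_norm :: real where
  "gamma_norm = \<beta> powr a * Gamma a"

lemma gamma_norm_pos: "0 < gamma_norm"
  unfolding gamma_norm_def using shape_pos scale_pos by (simp add: Gamma_real_pos)

lemma gamma_density_pos_eq:
  "0 < x \<Longrightarrow> gamma_density a \<beta> x = x powr (a - 1) * exp (- x / \<beta>) / gamma_norm"
  by (simp add: gamma_density_def gamma_norm_def)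

lemma gamma_density_nonneg: "0 \<le> gamma_density a \<beta> x"
  using gamma_norm_pos by (simp add: gamma_density_def gamma_norm_def[symmetric])

lemma gamma_density_le: "0 < x \<Longrightarrow> gamma_density a \<beta> x \<le> x powr (a - 1) / gamma_norm"
  using gamma_norm_pos scale_pos
  by (auto simp: gamma_density_pos_eq intro!: divide_right_mono mult_left_le)

lemma gamma_density_ge:
  assumes "0 < x"
  shows "x powr (a - 1) * (1 - x / \<beta>) / gamma_norm \<le> gamma_density a \<beta> x"
proof -
  have "1 - x / \<beta> \<le> exp (- x / \<beta>)"
    using exp_ge_add_one_self[of "- x / \<beta>"] by simp
  then show ?thesis
    using assms gamma_norm_pos
    by (simp add: gamma_density_pos_eq divide_right_mono mult_left_mono)
qed

lemma gamma_density_div_eq: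
  assumes "0 < u"
  shows "gamma_density a \<beta> u / u = u powr (a - 2) * exp (- u / \<beta>) / gamma_norm"
  using assms by (simp add: gamma_density_pos_eq powr_diff power2_eq_square)

lemma integrable_gamma_density: "integrable lborel (gamma_density a \<beta>)"
proof -
  have "set_integrable lborel {0..} (\<lambda>t. t powr (a - 1) / exp t)"
    using Gamma_integral_real[OF shape_pos]
    by (intro set_integrable_if_nonneg_integrable_on) (auto simp: has_integral_integrable)
  then have "integrable lborel (\<lambda>t. indicator {0..} t * (t powr (a - 1) / exp t))"
    unfolding set_integrable_def by simp
  from lborel_integrable_real_affine[OF this, of "1 / \<beta>" 0] scale_pos
  have "integrable lborel (\<lambda>x. \<beta> powr (a - 1) / gamma_norm *
          (indicator {0..} (x / \<beta>) * ((x / \<beta>) powr (a - 1) / exp (x / \<beta>))))"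
    by (intro integrable_mult_right) simp
  also have "(\<lambda>x. \<beta> powr (a - 1) / gamma_norm *
          (indicator {0..} (x / \<beta>) * ((x / \<beta>) powr (a - 1) / exp (x / \<beta>)))) = gamma_density a \<beta>"
  proof
    fix x :: real
    show "\<beta> powr (a - 1) / gamma_norm * (indicator {0..} (x / \<beta>) * ((x / \<beta>) powr (a - 1) / exp (x / \<beta>)))
        = gamma_density a \<beta> x"
      using scale_pos gamma_norm_pos
      by (cases "0 < x")
         (auto simp: gamma_density_def gamma_norm_def indicator_def powr_divide exp_minus
            field_simps zero_le_divide_iff)
  qed
  finally show ?thesis .
qed

lemma S_op_gamma_ge_log:
  assumes "1 \<le> a" "0 < x" "x \<le> 1"
  shows "exp (- 1 / \<beta>) / gamma_norm * x powr (a - 1) * - ln x \<le> S_op (gamma_density a \<beta>) x"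
proof (rule S_op_ge_has_integral[OF integrable_gamma_density assms(2,3) gamma_density_nonneg])
  show "((\<lambda>u. exp (- 1 / \<beta>) / gamma_norm * x powr (a - 1) * inverse u) has_integral
          exp (- 1 / \<beta>) / gamma_norm * x powr (a - 1) * - ln x) {x..1}"
    using has_integral_mult_right[OF has_integral_inverse_interval[OF assms(2,3)],
        of "exp (- 1 / \<beta>) / gamma_norm * x powr (a - 1)"] by simp
  fix u assume u: "x \<le> u" "u \<le> 1"
  have "exp (- 1 / \<beta>) * x powr (a - 1) \<le> exp (- u / \<beta>) * u powr (a - 1)"
    using u assms scale_pos by (intro mult_mono powr_mono2) (auto simp: divide_right_mono)
  then have "exp (- 1 / \<beta>) * x powr (a - 1) / gamma_norm * inverse u
               \<le> exp (- u / \<beta>) * u powr (a - 1) / gamma_norm * inverse u"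
    using u assms gamma_norm_pos by (intro mult_right_mono divide_right_mono) auto
  then show "exp (- 1 / \<beta>) / gamma_norm * x powr (a - 1) * inverse u \<le> gamma_density a \<beta> u / u"
    using u assms by (simp add: gamma_density_pos_eq divide_inverse mult_ac)
qed

lemma S_op_gamma_ge_powr:
  assumes "a < 1" "0 < x" "x \<le> y"
  shows "exp (- y / \<beta>) / gamma_norm * ((x powr (a - 1) - y powr (a - 1)) / (1 - a))
           \<le> S_op (gamma_density a \<beta>) x"
proof (rule S_op_ge_has_integral[OF integrable_gamma_density assms(2,3) gamma_density_nonneg])
  show "((\<lambda>u. exp (- y / \<beta>) / gamma_norm * u powr (a - 2)) has_integral
      exp (- y / \<beta>) / gamma_norm * ((x powr (a - 1) - y powr (a - 1)) / (1 - a))) {x..y}"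
    using assms by (intro has_integral_mult_right has_integral_powr_minus_2_interval) auto
  fix u assume u: "x \<le> u" "u \<le> y"
  have "exp (- y / \<beta>) \<le> exp (- u / \<beta>)"
    using u scale_pos by (simp add: divide_right_mono)
  then show "exp (- y / \<beta>) / gamma_norm * u powr (a - 2) \<le> gamma_density a \<beta> u / u"
    using u assms gamma_norm_pos
    by (simp add: gamma_density_div_eq mult_left_mono divide_right_mono field_simps)
qed

lemma gamma_density_div_le:
  assumes "a < 1" "0 < u"
  shows "gamma_density a \<beta> u / u
           \<le> (if u \<le> \<beta> then u powr (a - 2) / gamma_norm else 0)
              + \<beta> powr (a - 2) / gamma_norm * exp (- (1 / \<beta>) * u)"
proof (cases "u \<le> \<beta>")
  case True
  have "gamma_density a \<beta> u / u \<le> u powr (a - 2) / gamma_norm"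
    using assms scale_pos gamma_norm_pos
    by (auto simp: gamma_density_div_eq intro!: divide_right_mono mult_left_le)
  moreover have "0 \<le> \<beta> powr (a - 2) / gamma_norm * exp (- (1 / \<beta>) * u)"
    using gamma_norm_pos by simp
  ultimately show ?thesis
    using True by simp
next
  case False
  have "gamma_density a \<beta> u / u = u powr (a - 2) * exp (- u / \<beta>) / gamma_norm"
    by (rule gamma_density_div_eq[OF assms(2)])
  also have "\<dots> \<le> \<beta> powr (a - 2) * exp (- u / \<beta>) / gamma_norm"
    using gamma_norm_pos scale_pos False assms
    by (intro divide_right_mono mult_right_mono powr_mono2') auto
  finally show ?thesis
    using False by simp
qed

lemma S_op_gamma_le:
  assumes "a < 1" "0 < x" "x \<le> \<beta>"
  shows "S_op (gamma_density a \<beta>) x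
           \<le> (x powr (a - 1) - \<beta> powr (a - 1)) / ((1 - a) * gamma_norm) + \<beta> powr (a - 1) / gamma_norm"
proof -
  have "((\<lambda>u. u powr (a - 2) / gamma_norm) has_integral
          (x powr (a - 1) - \<beta> powr (a - 1)) / (1 - a) / gamma_norm) {x..\<beta>}"
    using assms by (intro has_integral_divide has_integral_powr_minus_2_interval) auto
  then have head: "((\<lambda>u. if u \<le> \<beta> then u powr (a - 2) / gamma_norm else 0) has_integral
                    (x powr (a - 1) - \<beta> powr (a - 1)) / ((1 - a) * gamma_norm)) {x..}"
    using has_integral_restrict_Int[of "{..\<beta>}" "\<lambda>u. u powr (a - 2) / gamma_norm" _ "{x..}"]
    by (simp add: Int_commute atLeastAtMost_def divide_divide_eq_left)
  have tail: "((\<lambda>u. \<beta> powr (a - 2) / gamma_norm * exp (- (1 / \<beta>) * u)) has_integral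
                \<beta> powr (a - 2) / gamma_norm * (exp (- (1 / \<beta>) * x) / (1 / \<beta>))) {x..}"
    using scale_pos by (intro has_integral_mult_right has_integral_exp_minus_to_infinity) auto
  have "S_op (gamma_density a \<beta>) x \<le> (x powr (a - 1) - \<beta> powr (a - 1)) / ((1 - a) * gamma_norm)
          + \<beta> powr (a - 2) / gamma_norm * (exp (- (1 / \<beta>) * x) / (1 / \<beta>))"
    using assms by (intro S_op_le_has_integral[OF integrable_gamma_density assms(2) has_integral_add[OF head tail]]
        gamma_density_div_le) auto
  also have "\<beta> powr (a - 2) / gamma_norm * (exp (- (1 / \<beta>) * x) / (1 / \<beta>))
               = exp (- (x / \<beta>)) * (\<beta> powr (a - 1) / gamma_norm)"
    using scale_pos by (simp add: powr_diff power2_eq_square field_simps)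
  also have "\<dots> \<le> \<beta> powr (a - 1) / gamma_norm"
    using assms scale_pos gamma_norm_pos by (intro mult_left_le_one_le) auto
  finally show ?thesis by simp
qed

lemma S_op_gamma_le_powr:
  assumes "a < 1" "0 < u" "u \<le> \<beta>"
  shows "S_op (gamma_density a \<beta>) u \<le> (2 - a) / ((1 - a) * gamma_norm) * u powr (a - 1)"
proof -
  have "\<beta> powr (a - 1) \<le> u powr (a - 1)"
    using assms by (intro powr_mono2') auto
  then have "(u powr (a - 1) - \<beta> powr (a - 1)) / ((1 - a) * gamma_norm) + \<beta> powr (a - 1) / gamma_norm
               \<le> u powr (a - 1) / ((1 - a) * gamma_norm) + u powr (a - 1) / gamma_norm"
    using assms gamma_norm_pos by (intro add_mono divide_right_mono) auto
  also have "\<dots> = (2 - a) / ((1 - a) * gamma_norm) * u powr (a - 1)"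
    using assms gamma_norm_pos by (simp add: field_simps)
  finally show ?thesis
    using S_op_gamma_le[OF assms] by linarith
qed

lemma TM_op_gamma_ge_S_op:
  "0 \<le> \<mu> \<Longrightarrow> \<mu> \<le> 1 \<Longrightarrow> 0 < x \<Longrightarrow>
    \<mu> / 2 * S_op (gamma_density a \<beta>) x \<le> TM_op \<mu> (gamma_density a \<beta>) x"
  using gamma_density_nonneg by (intro TM_op_ge_S_op) auto

lemma eventually_gamma_density_less_TM_op_of_ge1:
  assumes "1 \<le> a" "0 < \<mu>" "\<mu> \<le> 1"
  shows "eventually (\<lambda>x. gamma_density a \<beta> x < TM_op \<mu> (gamma_density a \<beta>) x) (at_right 0)"
proof -
  define c where "c = \<mu> / 2 * exp (- 1 / \<beta>)"
  have c_pos: "0 < c"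
    unfolding c_def using assms by simp
  have "eventually (\<lambda>x. ln x < - 1 / c) (at_right 0)"
    using ln_at_0 unfolding filterlim_at_bot_dense by blast
  moreover have "eventually (\<lambda>x::real. x < 1) (at_right 0)"
    by (rule eventually_less_at_right_0) simp
  moreover have "eventually (\<lambda>x::real. 0 < x) (at_right 0)"
    by (rule eventually_at_right_less)
  ultimately show ?thesis
  proof eventually_elim
    case (elim x)
    have "1 < c * - ln x"
      using elim c_pos by (simp add: field_simps)
    then have "x powr (a - 1) / gamma_norm * 1 < x powr (a - 1) / gamma_norm * (c * - ln x)"
      using elim gamma_norm_pos by (intro mult_strict_left_mono) auto
    also have "\<dots> = \<mu> / 2 * (exp (- 1 / \<beta>) / gamma_norm * x powr (a - 1) * - ln x)"
      unfolding c_def by (simp add: mult_ac)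
    also have "\<dots> \<le> \<mu> / 2 * S_op (gamma_density a \<beta>) x"
      using S_op_gamma_ge_log[OF assms(1), of x] elim assms by (intro mult_left_mono) auto
    also have "\<dots> \<le> TM_op \<mu> (gamma_density a \<beta>) x"
      using TM_op_gamma_ge_S_op elim assms by simp
    finally show ?case
      using gamma_density_le[of x] elim by simp
  qed
qed

lemma eventually_gamma_density_less_TM_op_of_lt1:
  assumes "a < 1" "0 < \<mu>" "\<mu> \<le> 1" "2 * (1 - a) < \<mu>"
  shows "eventually (\<lambda>x. gamma_density a \<beta> x < TM_op \<mu> (gamma_density a \<beta>) x) (at_right 0)"
proof -
  define r where "r = \<mu> / (2 * (1 - a))"
  have "1 < r"
    unfolding r_def using assms by (simp add: less_divide_eq)
  then obtain y where y_pos: "0 < y" and s_gt_1: "1 < r * exp (- y / \<beta>)"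
    using scale_pos by (rule exists_mult_exp_gt_1)
  define s where "s = r * exp (- y / \<beta>)"
  define Py where "Py = y powr (a - 1)"
  have "eventually (\<lambda>x. s * Py / (s - 1) < x powr (a - 1)) (at_right 0)"
    using assms by (intro eventually_powr_greater_at_right_0) auto
  moreover have "eventually (\<lambda>x::real. x < y) (at_right 0)"
    using y_pos by (rule eventually_less_at_right_0)
  moreover have "eventually (\<lambda>x::real. 0 < x) (at_right 0)"
    by (rule eventually_at_right_less)
  ultimately show ?thesis
  proof eventually_elim
    case (elim x)
    define P where "P = x powr (a - 1)"
    have "s * Py < P * (s - 1)"
      using elim s_gt_1 unfolding P_def s_def by (simp add: divide_less_eq mult.commute)
    then have "P / gamma_norm < s * (P - Py) / gamma_norm"
      using gamma_norm_pos by (intro divide_strict_right_mono) (auto simp: algebra_simps)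
    also have "\<dots> = \<mu> / 2 * (exp (- y / \<beta>) / gamma_norm * ((P - Py) / (1 - a)))"
      unfolding s_def r_def using assms gamma_norm_pos by (simp add: field_simps)
    also have "\<dots> \<le> \<mu> / 2 * S_op (gamma_density a \<beta>) x"
      using S_op_gamma_ge_powr[OF assms(1), of x y] elim assms
      unfolding P_def Py_def by (intro mult_left_mono) auto
    also have "\<dots> \<le> TM_op \<mu> (gamma_density a \<beta>) x"
      using TM_op_gamma_ge_S_op elim assms by simp
    finally show ?case
      using gamma_density_le[of x] elim unfolding P_def by simp
  qed
qed

lemma S_op_gamma_nonneg: "0 \<le> u \<Longrightarrow> 0 \<le> S_op (gamma_density a \<beta>) u"
  using gamma_density_nonneg by (intro S_op_nonneg) auto

lemma conv0_gamma_le: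
  assumes "a < 1" "0 < x" "x \<le> \<beta>"
  defines "K \<equiv> (2 - a) / ((1 - a) * gamma_norm)"
    and "W \<equiv> 2 powr (2 - a) / a * x powr (2 * a - 1)"
  shows "gamma_norm * conv0 (gamma_density a \<beta>) (S_op (gamma_density a \<beta>)) x \<le> K * W"
    and "conv0 (S_op (gamma_density a \<beta>)) (S_op (gamma_density a \<beta>)) x \<le> K\<^sup>2 * W"
proof -
  let ?q = "gamma_density a \<beta>"
  have K_nonneg: "0 \<le> K"
    unfolding K_def using assms(1) gamma_norm_pos by simp
  have S_le: "S_op ?q u \<le> K * u powr (a - 1)" if "0 < u" "u < x" for u
    unfolding K_def using S_op_gamma_le_powr[OF assms(1), of u] that assms by simp
  have "conv0 ?q (S_op ?q) x \<le> 1 / gamma_norm * K * W"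
    unfolding W_def mult.assoc[symmetric]
    by (rule conv0_powr_bound[OF assms(2) shape_pos assms(1)])
       (use gamma_norm_pos K_nonneg gamma_density_nonneg S_op_gamma_nonneg gamma_density_le S_le in auto)
  then show "gamma_norm * conv0 ?q (S_op ?q) x \<le> K * W"
    using gamma_norm_pos by (simp add: field_simps)
  have "conv0 (S_op ?q) (S_op ?q) x \<le> K * K * W"
    unfolding W_def mult.assoc[symmetric]
    by (rule conv0_powr_bound[OF assms(2) shape_pos assms(1)]) (use K_nonneg S_op_gamma_nonneg S_le in auto)
  then show "conv0 (S_op ?q) (S_op ?q) x \<le> K\<^sup>2 * W"
    by (simp add: power2_eq_square)
qed

lemma gamma_norm_mult_half_S_op_minus_gamma_density_le:
  assumes "a < 1" "0 \<le> \<mu>" "0 < x" "x \<le> \<beta>"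
  defines "r \<equiv> \<mu> / (2 * (1 - a))"
  shows "gamma_norm * (\<mu> / 2 * S_op (gamma_density a \<beta>) x - gamma_density a \<beta> x)
           \<le> (r - 1) * x powr (a - 1) - (r - \<mu> / 2) * \<beta> powr (a - 1) + x powr a / \<beta>"
proof -
  define P where "P = x powr (a - 1)"
  define Pb where "Pb = \<beta> powr (a - 1)"
  have "\<mu> / 2 * S_op (gamma_density a \<beta>) x - gamma_density a \<beta> x
          \<le> \<mu> / 2 * ((P - Pb) / ((1 - a) * gamma_norm) + Pb / gamma_norm) - P * (1 - x / \<beta>) / gamma_norm"
    using mult_left_mono[OF S_op_gamma_le[OF assms(1,3,4)], of "\<mu> / 2"] gamma_density_ge[OF assms(3)]
      assms(2)
    unfolding P_def Pb_def by linarith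
  also have "\<dots> = ((r - 1) * P - (r - \<mu> / 2) * Pb + P * x / \<beta>) / gamma_norm"
  proof -
    have "\<mu> / 2 * ((P - Pb) / ((1 - a) * gamma_norm)) = r * (P - Pb) / gamma_norm"
      unfolding r_def by simp
    then show ?thesis
      by (simp add: diff_divide_distrib add_divide_distrib algebra_simps)
  qed
  finally have "gamma_norm * (\<mu> / 2 * S_op (gamma_density a \<beta>) x - gamma_density a \<beta> x)
                  \<le> (r - 1) * P - (r - \<mu> / 2) * Pb + P * x / \<beta>"
    using gamma_norm_pos by (simp add: pos_le_divide_eq mult.commute)
  moreover have "P * x = x powr a"
    unfolding P_def using assms(3) by (simp add: powr_mult_base mult.commute)
  ultimately show ?thesis
    unfolding P_def Pb_def by simp
qed

lemma gamma_norm_mult_TM_op_minus_gamma_density_le: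
  assumes "a < 1" "0 \<le> \<mu>" "\<mu> \<le> 1"
  defines "r \<equiv> \<mu> / (2 * (1 - a))"
  obtains M where "0 \<le> M"
    and "\<And>x. 0 < x \<Longrightarrow> x \<le> \<beta> \<Longrightarrow>
           gamma_norm * (TM_op \<mu> (gamma_density a \<beta>) x - gamma_density a \<beta> x)
           \<le> M * x powr (2 * a - 1) + (r - 1) * x powr (a - 1) - (r - \<mu> / 2) * \<beta> powr (a - 1)
              + x powr a / \<beta>"
proof -
  let ?q = "gamma_density a \<beta>"
  define K where "K = (2 - a) / ((1 - a) * gamma_norm)"
  define M where "M = (\<mu> / 2 * K + (1 - \<mu>) * gamma_norm * K\<^sup>2) * (2 powr (2 - a) / a)"
  have "gamma_norm * (TM_op \<mu> ?q x - ?q x)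
          \<le> M * x powr (2 * a - 1) + (r - 1) * x powr (a - 1) - (r - \<mu> / 2) * \<beta> powr (a - 1) + x powr a / \<beta>"
    if x: "0 < x" "x \<le> \<beta>" for x
  proof -
    define W where "W = 2 powr (2 - a) / a * x powr (2 * a - 1)"
    note conv_le = conv0_gamma_le[OF assms(1) x, folded K_def W_def]
    have "gamma_norm * (TM_op \<mu> ?q x - ?q x)
            = \<mu> / 2 * (gamma_norm * conv0 ?q (S_op ?q) x)
              + (1 - \<mu>) * (gamma_norm * conv0 (S_op ?q) (S_op ?q) x)
              + gamma_norm * (\<mu> / 2 * S_op ?q x - ?q x)"
      unfolding TM_op_eq_conv0 by (simp add: algebra_simps)
    also have "\<dots> \<le> \<mu> / 2 * (K * W) + (1 - \<mu>) * (gamma_norm * (K\<^sup>2 * W))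
                    + ((r - 1) * x powr (a - 1) - (r - \<mu> / 2) * \<beta> powr (a - 1) + x powr a / \<beta>)"
      using conv_le gamma_norm_pos assms(2,3)
        gamma_norm_mult_half_S_op_minus_gamma_density_le[OF assms(1,2) x, folded r_def]
      by (intro add_mono mult_left_mono) auto
    also have "\<dots> = M * x powr (2 * a - 1) + (r - 1) * x powr (a - 1) - (r - \<mu> / 2) * \<beta> powr (a - 1)
                      + x powr a / \<beta>"
      unfolding M_def W_def using shape_pos by (simp add: field_simps)
    finally show ?thesis .
  qed
  moreover have "0 \<le> M"
    unfolding M_def K_def using gamma_norm_pos assms shape_pos by simp
  ultimately show thesis
    using that by blast
qed

lemma eventually_TM_op_less_gamma_density:
  assumes "a < 1" "0 < \<mu>" "\<mu> < 1" "\<mu> \<le> 2 * (1 - a)"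
  shows "eventually (\<lambda>x. TM_op \<mu> (gamma_density a \<beta>) x < gamma_density a \<beta> x) (at_right 0)"
proof -
  define r where "r = \<mu> / (2 * (1 - a))"
  define D where "D = (r - \<mu> / 2) * \<beta> powr (a - 1)"
  obtain M where M_nonneg: "0 \<le> M"
    and bound: "\<And>x. 0 < x \<Longrightarrow> x \<le> \<beta> \<Longrightarrow>
      gamma_norm * (TM_op \<mu> (gamma_density a \<beta>) x - gamma_density a \<beta> x)
        \<le> M * x powr (2 * a - 1) + (r - 1) * x powr (a - 1) - D + x powr a / \<beta>"
    using gamma_norm_mult_TM_op_minus_gamma_density_le[OF assms(1), of \<mu>] assms
    unfolding r_def D_def by auto
  have "\<mu> / 2 < r"
    unfolding r_def using assms shape_pos by (simp add: field_simps)
  then have D_pos: "0 < D"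
    unfolding D_def using scale_pos by simp
  have "r \<le> 1"
    unfolding r_def using assms by (simp add: divide_le_eq)
  moreover have "0 < 2 * a - 1" if "r = 1"
    using that assms unfolding r_def by (auto simp: field_simps)
  ultimately have "eventually (\<lambda>x. M * x powr (2 * a - 1) + (r - 1) * x powr (a - 1) < D / 2) (at_right 0)"
    using M_nonneg shape_pos D_pos by (intro eventually_powr_combination_less) auto
  moreover have "eventually (\<lambda>x. x powr a < \<beta> * (D / 2)) (at_right 0)"
    using shape_pos scale_pos D_pos by (intro eventually_powr_less_at_right_0) auto
  moreover have "eventually (\<lambda>x::real. x < \<beta>) (at_right 0)"
    using scale_pos by (rule eventually_less_at_right_0)
  moreover have "eventually (\<lambda>x::real. 0 < x) (at_right 0)"
    by (rule eventually_at_right_less)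
  ultimately show ?thesis
  proof eventually_elim
    case (elim x)
    have "x powr a / \<beta> < D / 2"
      using elim scale_pos by (simp add: divide_less_eq mult.commute)
    then have "gamma_norm * (TM_op \<mu> (gamma_density a \<beta>) x - gamma_density a \<beta> x) < 0"
      using bound[of x] elim by linarith
    then show ?case
      using gamma_norm_pos by (simp add: mult_less_0_iff)
  qed
qed

lemma eventually_TM_op_gamma_density_neq:
  assumes "0 < \<mu>" "\<mu> < 1"
  shows "eventually (\<lambda>x. TM_op \<mu> (gamma_density a \<beta>) x \<noteq> gamma_density a \<beta> x) (at_right 0)"
proof -
  consider "1 \<le> a" | "a < 1" "2 * (1 - a) < \<mu>" | "a < 1" "\<mu> \<le> 2 * (1 - a)"
    by linarith
  then show ?thesis
  proof cases
    case 1
    then show ?thesis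
      using eventually_gamma_density_less_TM_op_of_ge1[OF 1, of \<mu>] assms
      by (auto elim: eventually_mono)
  next
    case 2
    then show ?thesis
      using eventually_gamma_density_less_TM_op_of_lt1[OF 2(1) _ _ 2(2)] assms
      by (auto elim: eventually_mono)
  next
    case 3
    then show ?thesis
      using eventually_TM_op_less_gamma_density[OF 3(1) assms 3(2)]
      by (auto elim: eventually_mono)
  qed
qed

end

theorem mainTheorem6:
  fixes \<mu> a \<beta> :: real
  assumes "0 < \<mu>" "\<mu> < 1" "0 < a" "0 < \<beta>"
  shows "\<not> (\<forall>x>0. TM_op \<mu> (gamma_density a \<beta>) x = gamma_density a \<beta> x)"
proof -
  have "eventually (\<lambda>x. 0 < x \<and> TM_op \<mu> (gamma_density a \<beta>) x \<noteq> gamma_density a \<beta> x) (at_right 0)"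
    using eventually_at_right_less eventually_TM_op_gamma_density_neq[OF assms(3,4,1,2)]
    by (rule eventually_conj)
  then obtain x where "0 < x" "TM_op \<mu> (gamma_density a \<beta>) x \<noteq> gamma_density a \<beta> x"
    using eventually_happens'[OF trivial_limit_at_right_real] by blast
  then show ?thesis
    by blast
qed

end
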